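(* Let $n\ge 2$ and let $f$ be the $n$-ary operation on $\mathbb{Z}_8$ given by $f(\mathbf{x})=x_1x_2\cdots x_n\sum_{\alpha\in I_n}b_\alpha\mathbf{x}^\alpha$ with $b_\alpha\in\mathbb{Z}_8$. Then $f$ preserves the relation $Z$ if and only if every $b_\alpha$ is even.
   Context: $I_n$ is the set of all $n$-tuples $\alpha\in\{0,1,2\}^n$ with at most two nonzero components, and $\mathbf{x}^\alpha=x_1^{\alpha_1}\cdots x_n^{\alpha_n}$. $P_4$ is the power set of $\{1,2,3,4\}$. For $A\in P_4$, $\mathbf{g}^A\in\mathbb{Z}_8^{P_4}$ is the tuple with $B$-component $1$ if $A\subseteq B$ and $0$ otherwise. Every $\mathbf{u}\in\mathbb{Z}_8^{P_4}$ has a unique expression $\mathbf{u}=\sum_{A\in P_4}a_A\mathbf{g}^A$ with $a_A\in\mathbb{Z}_8$. $Z\subseteq \mathbb{Z}_8^{P_4}$ consists of all $\mathbf{u}$ whose coefficients satisfy: (Z1) $a_{\{2\}}\equiv 2a_{\{1\}}\pmod 4$ and $a_{\{4\}}\equiv 2a_{\{3\}}\pmod 4$; (Z2) $a_A\equiv 0\pmod 2$ whenever $|A|\ge 2$; (Z3) $a_A\equiv 0\pmod 4$ whenever $|A|\ge 2$ and $A\cap\{2,4\}\neq\emptyset$; (Z4) $a_A=0$ whenever $\{2,4\}\subseteq A$. An operation preserves $Z$ if applying it componentwise to elements of $Z$ yields an element of $Z$. *)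

theory Defs
  imports "HOL-Library.Numeral_Type"
begin

text \<open>Z_8 is the numeral type 8 (arithmetic modulo 8).
  n-tuples are functions nat => 8 indexed by {1..n}.\<close>

definition P4 :: "nat set set" where
  "P4 = Pow {1,2,3,4}"

text \<open>Elements of Z_8^{P_4}: functions nat set => 8, supported on P4.\<close>
definition gvec :: "nat set \<Rightarrow> nat set \<Rightarrow> 8" where
  "gvec A = (\<lambda>B. if B \<in> P4 \<and> A \<subseteq> B then 1 else 0)"

definition combo :: "(nat set \<Rightarrow> 8) \<Rightarrow> nat set \<Rightarrow> 8" where
  "combo a = (\<lambda>B. \<Sum>A\<in>P4. a A * gvec A B)"

definition Zrel :: "(nat set \<Rightarrow> 8) set" where
  "Zrel = {u. \<exists>a. u = combo a \<and>
      (4::8) dvd (a {2} - 2 * a {1}) \<and> (4::8) dvd (a {4} - 2 * a {3}) \<and>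
      (\<forall>A\<in>P4. 2 \<le> card A \<longrightarrow> (2::8) dvd a A) \<and>
      (\<forall>A\<in>P4. 2 \<le> card A \<and> A \<inter> {2::nat,4} \<noteq> {} \<longrightarrow> (4::8) dvd a A) \<and>
      (\<forall>A\<in>P4. {2::nat,4} \<subseteq> A \<longrightarrow> a A = 0)}"

definition I_set :: "nat \<Rightarrow> (nat \<Rightarrow> nat) set" where
  "I_set n = {\<alpha>. (\<forall>i. \<alpha> i \<le> 2) \<and> (\<forall>i. i \<notin> {1..n} \<longrightarrow> \<alpha> i = 0)
                 \<and> card {i\<in>{1..n}. \<alpha> i \<noteq> 0} \<le> 2}"

definition monom :: "nat \<Rightarrow> (nat \<Rightarrow> nat) \<Rightarrow> (nat \<Rightarrow> 8) \<Rightarrow> 8" where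
  "monom n \<alpha> x = (\<Prod>i\<in>{1..n}. x i ^ \<alpha> i)"

definition fop :: "nat \<Rightarrow> ((nat \<Rightarrow> nat) \<Rightarrow> 8) \<Rightarrow> (nat \<Rightarrow> 8) \<Rightarrow> 8" where
  "fop n b x = (\<Prod>i\<in>{1..n}. x i) * (\<Sum>\<alpha>\<in>I_set n. b \<alpha> * monom n \<alpha> x)"

definition preserves :: "nat \<Rightarrow> ((nat \<Rightarrow> 8) \<Rightarrow> 8) \<Rightarrow> bool" where
  "preserves n f \<longleftrightarrow> (\<forall>u :: nat \<Rightarrow> nat set \<Rightarrow> 8. (\<forall>i\<in>{1..n}. u i \<in> Zrel) \<longrightarrow>
      (\<lambda>B. if B \<in> P4 then f (\<lambda>i. u i B) else 0) \<in> Zrel)"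

end

(*
  Write u in Z_8^{P_4} as the sum of a_A g^A; the a_A are the Moebius coefficients of u viewed
  as a function of B \<subseteq> {1,2,3,4}.

  Every u in Z has dyadic faces: on each square C, C+{2}, C+{4}, C+{2,4} with C \<subseteq> {1,3}
  its first differences are even and its mixed second difference is divisible by 4. Such
  functions form a subring, and twice such a function lies in Z. So if all b_alpha are even,
  f = 2 h for a polynomial h, and f preserves Z.

  Conversely, put s = 1 + g^{1} + 2 g^{2} and t = 1 + g^{3} + 2 g^{4} (both in Z) into
  positions i \<noteq> j and 1 elsewhere. At each of the nine sets meeting both {1,2} and {3,4},
  Z forces the Moebius coefficient of f(..., s, ..., t, ...) to vanish modulo 2, 4 or 8, which
  makes the sum of b_alpha phi(alpha_i) psi(alpha_j) even for one of nine products phi psi;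
  these span all functions {0,1,2}^2 \<rightarrow> Z_8. With indicator functions, the sum
  of b_beta over all beta with prescribed beta_i and beta_j is even; these sums isolate each
  b_alpha by induction on the number of zero coordinates of alpha.
*)

theory Submission
  imports Defs
begin

section \<open>Arithmetic modulo 8\<close>

lemma Z8_cases: "(x::8) = 0 \<or> x = 1 \<or> x = 2 \<or> x = 3 \<or> x = 4 \<or> x = 5 \<or> x = 6 \<or> x = 7"
proof (induct x)
  case (of_int z)
  then have "z = 0 \<or> z = 1 \<or> z = 2 \<or> z = 3 \<or> z = 4 \<or> z = 5 \<or> z = 6 \<or> z = 7"
    by auto
  then show ?case
    by auto
qed

lemma even_Z8_iff: "(2::8) dvd x \<longleftrightarrow> x \<in> {0, 2, 4, 6}"
proof
  assume "2 dvd x"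
  then obtain k where "x = 2 * k" ..
  then show "x \<in> {0, 2, 4, 6}"
    using Z8_cases[of k] by auto
next
  assume "x \<in> {0, 2, 4, 6}"
  then have "x \<in> {2 * 0, 2 * 1, 2 * 2, 2 * 3}"
    by simp
  then show "2 dvd x"
    using dvd_triv_left[of "2::8" 2] dvd_triv_left[of "2::8" 3] by auto
qed

lemma four_dvd_Z8_iff: "(4::8) dvd x \<longleftrightarrow> x \<in> {0, 4}"
proof
  assume "4 dvd x"
  then obtain k where "x = 4 * k" ..
  then show "x \<in> {0, 4}"
    using Z8_cases[of k] by auto
qed auto

lemma Z8_even_if_four_dvd_double: "(4::8) dvd 2 * z \<Longrightarrow> 2 dvd z"
  using Z8_cases[of z] by (auto simp: four_dvd_Z8_iff even_Z8_iff)

lemma Z8_even_if_four_times_eq_0: "(4::8) * z = 0 \<Longrightarrow> 2 dvd z"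
  using Z8_cases[of z] by (auto simp: even_Z8_iff)

lemma four_dvd_imp_two_dvd:
  assumes "(4::'a::comm_ring_1) dvd x"
  shows "2 dvd x"
proof -
  have "(2::'a) dvd 4"
    by (rule dvdI[of _ _ 2]) simp
  then show ?thesis
    using assms by (rule dvd_trans)
qed

section \<open>Moebius coefficients of set functions\<close>

lemma sum_Pow_insert:
  assumes "finite A" "x \<notin> A"
  shows "sum g (Pow (insert x A)) = sum g (Pow A) + (\<Sum>T\<in>Pow A. g (insert x T))"
proof -
  have "inj_on (insert x) (Pow A)"
    using assms(2) by (auto simp: inj_on_def)
  moreover have "Pow A \<inter> insert x ` Pow A = {}"
    using assms(2) by auto
  ultimately show ?thesis
    unfolding Pow_insert using assms(1) by (simp add: sum.union_disjoint sum.reindex)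
qed

definition mobius :: "('a set \<Rightarrow> 'b::comm_ring_1) \<Rightarrow> 'a set \<Rightarrow> 'b" where
  "mobius u A = (\<Sum>T\<in>Pow A. (- 1) ^ (card A - card T) * u T)"

lemma mobius_empty [simp]: "mobius u {} = u {}"
  by (simp add: mobius_def)

lemma mobius_insert:
  assumes "finite A" "x \<notin> A"
  shows "mobius u (insert x A) = mobius (\<lambda>T. u (insert x T) - u T) A"
proof -
  have term_eq: "(- 1) ^ (card (insert x A) - card T) * u T
      + (- 1) ^ (card (insert x A) - card (insert x T)) * u (insert x T)
      = (- 1) ^ (card A - card T) * (u (insert x T) - u T)" if "T \<in> Pow A" for T
  proof -
    have "card T \<le> card A" "finite T" "x \<notin> T"
      using that assms by (auto intro: card_mono finite_subset)
    then show ?thesis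
      using assms by (simp add: Suc_diff_le algebra_simps)
  qed
  have "mobius u (insert x A) = (\<Sum>T\<in>Pow A. (- 1) ^ (card (insert x A) - card T) * u T
      + (- 1) ^ (card (insert x A) - card (insert x T)) * u (insert x T))"
    by (simp only: mobius_def sum_Pow_insert[OF assms] sum.distrib)
  also have "\<dots> = mobius (\<lambda>T. u (insert x T) - u T) A"
    unfolding mobius_def by (intro sum.cong refl term_eq)
  finally show ?thesis .
qed

lemma mobius_cong: "(\<And>T. T \<subseteq> A \<Longrightarrow> u T = v T) \<Longrightarrow> mobius u A = mobius v A"
  by (simp add: mobius_def)

lemma mobius_sum: "mobius (\<lambda>T. \<Sum>k\<in>K. c k * u k T) A = (\<Sum>k\<in>K. c k * mobius (u k) A)"
  unfolding mobius_def sum_distrib_left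
  by (subst sum.swap) (simp add: algebra_simps)

lemma mobius_cmult: "mobius (\<lambda>T. c * u T) A = c * mobius u A"
  by (simp add: mobius_def sum_distrib_left algebra_simps)

lemma mobius_dvd: "(\<And>T. T \<subseteq> A \<Longrightarrow> d dvd u T) \<Longrightarrow> d dvd mobius u A"
  unfolding mobius_def by (auto intro!: dvd_sum dvd_mult)

lemma mobius_sum_Pow: "finite A \<Longrightarrow> mobius (\<lambda>T. sum a (Pow T)) A = a A"
  unfolding mobius_def by (rule inclusion_exclusion_mobius[symmetric]) simp

lemma sum_Pow_mobius: "finite B \<Longrightarrow> sum (mobius u) (Pow B) = u B"
proof (induction B arbitrary: u rule: finite_induct)
  case (insert x B)
  have "(\<Sum>T\<in>Pow B. mobius u (insert x T)) = (\<Sum>T\<in>Pow B. mobius (\<lambda>S. u (insert x S) - u S) T)"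
    using insert.hyps by (intro sum.cong refl mobius_insert) (auto intro: finite_subset)
  then have "sum (mobius u) (Pow (insert x B)) = u B + (\<Sum>T\<in>Pow B. mobius (\<lambda>S. u (insert x S) - u S) T)"
    using insert by (simp add: sum_Pow_insert)
  also have "\<dots> = u (insert x B)"
    using insert.IH by simp
  finally show ?case .
qed simp

section \<open>The relation Z in terms of Moebius coefficients\<close>

lemma P4_finite: "B \<in> P4 \<Longrightarrow> finite B"
  by (auto simp: P4_def intro: finite_subset)

lemma P4_subset: "B \<in> P4 \<Longrightarrow> T \<subseteq> B \<Longrightarrow> T \<in> P4"
  by (auto simp: P4_def)

lemma P4_eq: "P4 = {{}, {1}, {2}, {3}, {4}, {1,2}, {1,3}, {1,4}, {2,3}, {2,4}, {3,4},
    {1,2,3}, {1,2,4}, {1,3,4}, {2,3,4}, {1,2,3,4}}"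
  unfolding P4_def by (simp add: Pow_insert insert_commute)

definition Z_coeffs :: "(nat set \<Rightarrow> 8) \<Rightarrow> bool" where
  "Z_coeffs a \<longleftrightarrow> 4 dvd (a {2} - 2 * a {1}) \<and> 4 dvd (a {4} - 2 * a {3}) \<and>
      (\<forall>A\<in>P4. 2 \<le> card A \<longrightarrow> 2 dvd a A) \<and>
      (\<forall>A\<in>P4. 2 \<le> card A \<and> A \<inter> {2, 4} \<noteq> {} \<longrightarrow> 4 dvd a A) \<and>
      (\<forall>A\<in>P4. {2, 4} \<subseteq> A \<longrightarrow> a A = 0)"

lemma Zrel_eq: "Zrel = {combo a |a. Z_coeffs a}"
  by (auto simp: Zrel_def Z_coeffs_def)

lemma Z_coeffs_cong: "(\<And>A. A \<in> P4 \<Longrightarrow> a A = a' A) \<Longrightarrow> Z_coeffs a \<longleftrightarrow> Z_coeffs a'"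
  by (simp add: Z_coeffs_def P4_def)

lemma combo_eq_sum_Pow:
  assumes B: "B \<in> P4"
  shows "combo a B = sum a (Pow B)"
proof -
  have "combo a B = (\<Sum>A\<in>P4. if A \<subseteq> B then a A else 0)"
    unfolding combo_def gvec_def using B by (intro sum.cong) auto
  also have "\<dots> = sum a {A\<in>P4. A \<subseteq> B}"
    by (rule sum.inter_filter[symmetric]) (simp add: P4_def)
  also have "{A\<in>P4. A \<subseteq> B} = Pow B"
    using B by (auto simp: P4_subset)
  finally show ?thesis .
qed

lemma combo_outside_P4: "B \<notin> P4 \<Longrightarrow> combo a B = 0"
  by (simp add: combo_def gvec_def)

lemma Zrel_iff_mobius: "u \<in> Zrel \<longleftrightarrow> (\<forall>B. B \<notin> P4 \<longrightarrow> u B = 0) \<and> Z_coeffs (mobius u)"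
proof
  assume "u \<in> Zrel"
  then obtain a where u: "u = combo a" and a: "Z_coeffs a"
    by (auto simp: Zrel_eq)
  have "mobius u A = a A" if "A \<in> P4" for A
  proof -
    have "mobius u A = mobius (\<lambda>T. sum a (Pow T)) A"
      unfolding u using that by (intro mobius_cong) (simp add: combo_eq_sum_Pow P4_subset)
    then show ?thesis
      using that by (simp add: mobius_sum_Pow P4_finite)
  qed
  then show "(\<forall>B. B \<notin> P4 \<longrightarrow> u B = 0) \<and> Z_coeffs (mobius u)"
    using a Z_coeffs_cong[of "mobius u" a] by (simp add: u combo_outside_P4)
next
  assume u: "(\<forall>B. B \<notin> P4 \<longrightarrow> u B = 0) \<and> Z_coeffs (mobius u)"
  have "u = combo (mobius u)"
  proof
    fix B
    show "u B = combo (mobius u) B"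
      using u by (cases "B \<in> P4") (simp_all add: combo_eq_sum_Pow sum_Pow_mobius P4_finite combo_outside_P4)
  qed
  then show "u \<in> Zrel"
    using u by (auto simp: Zrel_eq)
qed

lemma restrict_P4_in_Zrel:
  assumes "Z_coeffs (mobius u)"
  shows "(\<lambda>B. if B \<in> P4 then u B else 0) \<in> Zrel" (is "?v \<in> Zrel")
proof -
  have "mobius ?v A = mobius u A" if "A \<in> P4" for A
    using that by (intro mobius_cong) (simp add: P4_subset)
  then have "Z_coeffs (mobius ?v)"
    using assms Z_coeffs_cong[of "mobius ?v" "mobius u"] by blast
  then show ?thesis
    by (simp add: Zrel_iff_mobius)
qed

lemma Z_coeffs_even:
  assumes "Z_coeffs a" "A \<in> P4" "A \<inter> {2, 4} \<noteq> {}"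
  shows "2 dvd a A"
proof (cases "2 \<le> card A")
  case True
  then have "4 dvd a A"
    using assms by (simp add: Z_coeffs_def)
  then show ?thesis
    by (rule four_dvd_imp_two_dvd)
next
  case False
  obtain x where x: "x \<in> A" "x \<in> {2, 4}"
    using assms(3) by blast
  have "card A \<le> Suc 0"
    using False by simp
  then have "A = {x}"
    using x(1) P4_finite[OF assms(2)] by (auto simp: card_le_Suc0_iff_eq)
  moreover have "2 dvd a {2}" "2 dvd a {4}"
  proof -
    have "4 dvd a {2} - 2 * a {1}" "4 dvd a {4} - 2 * a {3}"
      using assms(1) by (simp_all add: Z_coeffs_def)
    then obtain k k' where "a {2} - 2 * a {1} = 4 * k" "a {4} - 2 * a {3} = 4 * k'"
      by (elim dvdE)
    then have "a {2} = 2 * (a {1} + 2 * k)" "a {4} = 2 * (a {3} + 2 * k')"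
      by (simp_all add: diff_eq_eq algebra_simps)
    then show "2 dvd a {2}" "2 dvd a {4}"
      by (metis dvd_triv_left)+
  qed
  ultimately show ?thesis
    using x(2) by auto
qed

section \<open>Even coefficients suffice\<close>

definition dyadic_square :: "'a::comm_ring_1 \<Rightarrow> 'a \<Rightarrow> 'a \<Rightarrow> 'a \<Rightarrow> bool" where
  "dyadic_square x y z w \<longleftrightarrow> 2 dvd y - x \<and> 2 dvd z - x \<and> 4 dvd w - y - z + x"

lemma dyadic_square_const: "dyadic_square c c c c"
  by (simp add: dyadic_square_def)

lemma dyadic_square_add:
  assumes "dyadic_square x y z w" "dyadic_square x' y' z' w'"
  shows "dyadic_square (x + x') (y + y') (z + z') (w + w')"
proof -
  have diffs: "y + y' - (x + x') = (y - x) + (y' - x')" "z + z' - (x + x') = (z - x) + (z' - x')"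
    "w + w' - (y + y') - (z + z') + (x + x') = (w - y - z + x) + (w' - y' - z' + x')"
    by (simp_all add: algebra_simps)
  show ?thesis
    using assms unfolding dyadic_square_def diffs by (blast intro: dvd_add)
qed

lemma dyadic_square_mult:
  assumes "dyadic_square x y z w" "dyadic_square x' y' z' w'"
  shows "dyadic_square (x * x') (y * y') (z * z') (w * w')"
proof -
  obtain p q r where "y - x = 2 * p" "z - x = 2 * q" "w - y - z + x = 4 * r"
    using assms(1) by (auto simp: dyadic_square_def elim!: dvdE)
  then have y: "y = x + 2 * p" and z: "z = x + 2 * q" and w: "w = x + 2 * p + 2 * q + 4 * r"
    by (simp_all add: algebra_simps)
  obtain p' q' r' where "y' - x' = 2 * p'" "z' - x' = 2 * q'" "w' - y' - z' + x' = 4 * r'"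
    using assms(2) by (auto simp: dyadic_square_def elim!: dvdE)
  then have y': "y' = x' + 2 * p'" and z': "z' = x' + 2 * q'"
    and w': "w' = x' + 2 * p' + 2 * q' + 4 * r'"
    by (simp_all add: algebra_simps)
  have diffs: "y * y' - x * x' = 2 * (p * x' + x * p' + 2 * p * p')"
    "z * z' - x * x' = 2 * (q * x' + x * q' + 2 * q * q')"
    "w * w' - y * y' - z * z' + x * x'
      = 4 * (r * x' + x * r' + p * q' + q * p' + 2 * (p * r' + q * r' + r * p' + r * q') + 4 * r * r')"
    unfolding y z w y' z' w' by (simp_all add: algebra_simps)
  show ?thesis
    unfolding dyadic_square_def diffs by (simp only: dvd_triv_left simp_thms)
qed

definition dyadic_faces :: "(nat set \<Rightarrow> 'a::comm_ring_1) \<Rightarrow> bool" where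
  "dyadic_faces w \<longleftrightarrow> (\<forall>C\<subseteq>{1, 3}.
      dyadic_square (w C) (w (insert 2 C)) (w (insert 4 C)) (w (insert 2 (insert 4 C))))"

lemma dyadic_faces_const: "dyadic_faces (\<lambda>B. c)"
  by (simp add: dyadic_faces_def dyadic_square_const)

lemma dyadic_faces_add: "dyadic_faces v \<Longrightarrow> dyadic_faces w \<Longrightarrow> dyadic_faces (\<lambda>B. v B + w B)"
  by (simp add: dyadic_faces_def dyadic_square_add)

lemma dyadic_faces_mult: "dyadic_faces v \<Longrightarrow> dyadic_faces w \<Longrightarrow> dyadic_faces (\<lambda>B. v B * w B)"
  by (simp add: dyadic_faces_def dyadic_square_mult)

lemma dyadic_faces_sum:
  "(\<And>k. k \<in> K \<Longrightarrow> dyadic_faces (w k)) \<Longrightarrow> dyadic_faces (\<lambda>B. \<Sum>k\<in>K. w k B)"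
  by (induction K rule: infinite_finite_induct) (simp_all add: dyadic_faces_const dyadic_faces_add)

lemma dyadic_faces_prod:
  "(\<And>k. k \<in> K \<Longrightarrow> dyadic_faces (w k)) \<Longrightarrow> dyadic_faces (\<lambda>B. \<Prod>k\<in>K. w k B)"
  by (induction K rule: infinite_finite_induct) (simp_all add: dyadic_faces_const dyadic_faces_mult)

lemma dyadic_faces_power: "dyadic_faces w \<Longrightarrow> dyadic_faces (\<lambda>B. w B ^ m)"
  using dyadic_faces_prod[of "{..<m}" "\<lambda>_. w"] by simp

lemma Zrel_imp_dyadic_faces:
  assumes "u \<in> Zrel"
  shows "dyadic_faces u"
  unfolding dyadic_faces_def
proof (intro allI impI)
  fix C :: "nat set"
  assume C: "C \<subseteq> {1, 3}"
  let ?a = "mobius u"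
  have a: "Z_coeffs ?a"
    using assms by (simp add: Zrel_iff_mobius)
  have fin: "finite C" "2 \<notin> C" "4 \<notin> C"
    using C by (auto intro: finite_subset)
  have u: "u B = sum ?a (Pow B)" if "finite B" for B
    using that by (simp add: sum_Pow_mobius)
  have in_P4: "insert 2 D \<in> P4" "insert 4 D \<in> P4" "insert 2 (insert 4 D) \<in> P4" if "D \<subseteq> C" for D
    using that C by (auto simp: P4_def)
  have diffs: "u (insert 2 C) - u C = (\<Sum>D\<in>Pow C. ?a (insert 2 D))"
    "u (insert 4 C) - u C = (\<Sum>D\<in>Pow C. ?a (insert 4 D))"
    "u (insert 2 (insert 4 C)) - u (insert 2 C) - u (insert 4 C) + u C
       = (\<Sum>D\<in>Pow C. ?a (insert 2 (insert 4 D)))"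
    using fin by (simp_all add: u sum_Pow_insert)
  have coeffs: "2 dvd ?a (insert 2 D)" "2 dvd ?a (insert 4 D)" "?a (insert 2 (insert 4 D)) = 0"
    if "D \<in> Pow C" for D
    using that in_P4[of D] a Z_coeffs_even[OF a] by (auto simp: Z_coeffs_def)
  show "dyadic_square (u C) (u (insert 2 C)) (u (insert 4 C)) (u (insert 2 (insert 4 C)))"
    unfolding dyadic_square_def diffs using coeffs by (auto intro!: dvd_sum)
qed

lemma mobius_dyadic_faces:
  assumes w: "dyadic_faces w" and A: "A \<in> P4"
  shows mobius_dyadic_faces_mixed: "{2, 4} \<subseteq> A \<Longrightarrow> 4 dvd mobius w A"
    and mobius_dyadic_faces_even: "A \<inter> {2, 4} \<noteq> {} \<Longrightarrow> 2 dvd mobius w A"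
proof -
  have face: "dyadic_square (w T) (w (insert 2 T)) (w (insert 4 T)) (w (insert 2 (insert 4 T)))"
    if "T \<subseteq> {1, 3}" for T
    using w that by (simp add: dyadic_faces_def)
  define C where "C = A - {2, 4}"
  have C: "C \<subseteq> {1, 3}" "finite C" "2 \<notin> C" "4 \<notin> C"
    using A by (auto simp: C_def P4_def intro: finite_subset)
  show mixed: "4 dvd mobius w A" if "{2, 4} \<subseteq> A"
  proof -
    have "A = insert 2 (insert 4 C)"
      using that by (auto simp: C_def)
    then have "mobius w A = mobius (\<lambda>T. w (insert 2 T) - w T) (insert 4 C)"
      using C by (simp add: mobius_insert)
    also have "\<dots> = mobius (\<lambda>T. w (insert 2 (insert 4 T)) - w (insert 4 T) - (w (insert 2 T) - w T)) C"
      using C by (simp add: mobius_insert)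
    also have "4 dvd \<dots>"
      using face C(1) by (intro mobius_dvd) (auto simp: dyadic_square_def algebra_simps)
    finally show ?thesis .
  qed
  show "2 dvd mobius w A" if hit: "A \<inter> {2, 4} \<noteq> {}"
  proof -
    consider "{2, 4} \<subseteq> A" | "A = insert 2 C" | "A = insert 4 C"
      using hit unfolding C_def by blast
    then show ?thesis
    proof cases
      case 1
      then show ?thesis
        using mixed four_dvd_imp_two_dvd by blast
    next
      case 2
      then have "mobius w A = mobius (\<lambda>T. w (insert 2 T) - w T) C"
        using C by (simp add: mobius_insert)
      also have "2 dvd \<dots>"
        using face C(1) by (intro mobius_dvd) (auto simp: dyadic_square_def)
      finally show ?thesis .
    next
      case 3
      then have "mobius w A = mobius (\<lambda>T. w (insert 4 T) - w T) C"
        using C by (simp add: mobius_insert)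
      also have "2 dvd \<dots>"
        using face C(1) by (intro mobius_dvd) (auto simp: dyadic_square_def)
      finally show ?thesis .
    qed
  qed
qed

lemma double_dyadic_faces_in_Zrel:
  assumes w: "dyadic_faces w"
  shows "(\<lambda>B. if B \<in> P4 then 2 * w B else 0) \<in> Zrel"
proof (rule restrict_P4_in_Zrel)
  show "Z_coeffs (mobius (\<lambda>B. 2 * w B))"
    unfolding mobius_cmult Z_coeffs_def
  proof (intro conjI ballI impI)
    have "2 dvd mobius w {2}" "2 dvd mobius w {4}"
      using w by (simp_all add: mobius_dyadic_faces_even P4_def)
    then show "4 dvd 2 * mobius w {2} - 2 * (2 * mobius w {1})"
      "4 dvd 2 * mobius w {4} - 2 * (2 * mobius w {3})"
      by (auto elim!: dvdE simp: algebra_simps)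
  next
    fix A assume "A \<in> P4" "2 \<le> card A"
    then show "2 dvd 2 * mobius w A"
      by simp
  next
    fix A assume "A \<in> P4" "2 \<le> card A \<and> A \<inter> {2, 4} \<noteq> {}"
    then have "2 dvd mobius w A"
      using w by (simp add: mobius_dyadic_faces_even)
    then show "4 dvd 2 * mobius w A"
      by (auto elim!: dvdE)
  next
    fix A assume "A \<in> P4" "{2, 4} \<subseteq> A"
    then have "4 dvd mobius w A"
      using w by (simp add: mobius_dyadic_faces_mixed)
    then obtain k where "mobius w A = 4 * k" ..
    then have "2 * mobius w A = 8 * k"
      by simp
    also have "(8::8) = 0"
      by simp
    finally show "2 * mobius w A = 0"
      by simp
  qed
qed

lemma finite_I_set: "finite (I_set n)"
proof (rule finite_subset)
  show "I_set n \<subseteq> {f. \<forall>x. (x \<in> {1..n} \<longrightarrow> f x \<in> {0..2}) \<and> (x \<notin> {1..n} \<longrightarrow> f x = 0)}"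
    unfolding I_set_def by auto
  show "finite {f. \<forall>x. (x \<in> {1..n} \<longrightarrow> f x \<in> {0..2::nat}) \<and> (x \<notin> {1..n} \<longrightarrow> f x = 0)}"
    by (rule finite_set_of_finite_funs) auto
qed

lemma preserves_if_coeffs_even:
  assumes "\<forall>\<alpha>\<in>I_set n. 2 dvd b \<alpha>"
  shows "preserves n (fop n b)"
  unfolding preserves_def
proof (intro allI impI)
  fix u :: "nat \<Rightarrow> nat set \<Rightarrow> 8"
  assume u: "\<forall>i\<in>{1..n}. u i \<in> Zrel"
  have "\<forall>\<alpha>\<in>I_set n. \<exists>k. b \<alpha> = 2 * k"
    using assms by (auto elim: dvdE)
  then obtain c where c: "\<And>\<alpha>. \<alpha> \<in> I_set n \<Longrightarrow> b \<alpha> = 2 * c \<alpha>"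
    by (metis bchoice)
  define g where
    "g B = (\<Prod>i\<in>{1..n}. u i B) * (\<Sum>\<alpha>\<in>I_set n. c \<alpha> * monom n \<alpha> (\<lambda>i. u i B))" for B
  have fop_eq: "fop n b (\<lambda>i. u i B) = 2 * g B" for B
    by (simp add: fop_def g_def c sum_distrib_left mult_ac cong: sum.cong)
  have "dyadic_faces g"
    unfolding g_def monom_def using u Zrel_imp_dyadic_faces
    by (intro dyadic_faces_mult dyadic_faces_prod dyadic_faces_sum dyadic_faces_const dyadic_faces_power) auto
  then show "(\<lambda>B. if B \<in> P4 then fop n b (\<lambda>i. u i B) else 0) \<in> Zrel"
    unfolding fop_eq by (rule double_dyadic_faces_in_Zrel)
qed

section \<open>Even coefficients are necessary\<close>

lemma dvd_weighted_sum_congruent: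
  fixes b h w :: "'i \<Rightarrow> 'a::comm_ring_1"
  assumes "d dvd (\<Sum>\<alpha>\<in>I. b \<alpha> * h \<alpha>)" "\<forall>\<alpha>\<in>I. d dvd h \<alpha> - c * w \<alpha>"
  shows "d dvd c * (\<Sum>\<alpha>\<in>I. b \<alpha> * w \<alpha>)"
proof -
  have "c * (\<Sum>\<alpha>\<in>I. b \<alpha> * w \<alpha>)
      = (\<Sum>\<alpha>\<in>I. b \<alpha> * h \<alpha>) - (\<Sum>\<alpha>\<in>I. b \<alpha> * (h \<alpha> - c * w \<alpha>))"
    by (simp add: sum_distrib_left sum_subtractf[symmetric] algebra_simps)
  moreover have "d dvd (\<Sum>\<alpha>\<in>I. b \<alpha> * (h \<alpha> - c * w \<alpha>))"
    using assms(2) by (auto intro!: dvd_sum)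
  ultimately show ?thesis
    using assms(1) by simp
qed

lemma prod_two_factors:
  assumes "finite K" "i \<in> K" "j \<in> K" "i \<noteq> j" "\<forall>k\<in>K - {i, j}. f k = 1"
  shows "prod f K = f i * f j"
proof -
  have "prod f K = prod f {i, j}"
    using assms by (intro prod.mono_neutral_right) auto
  then show ?thesis
    using assms(4) by simp
qed

lemma fop_two_inputs:
  assumes "i \<in> {1..n}" "j \<in> {1..n}" "i \<noteq> j" "\<forall>k\<in>{1..n} - {i, j}. x k = 1"
  shows "fop n b x = (\<Sum>\<alpha>\<in>I_set n. b \<alpha> * (x i ^ Suc (\<alpha> i) * x j ^ Suc (\<alpha> j)))"
proof -
  have "(\<Prod>k\<in>{1..n}. x k) = x i * x j" "monom n \<alpha> x = x i ^ \<alpha> i * x j ^ \<alpha> j" for \<alpha>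
    unfolding monom_def using assms by (simp_all add: prod_two_factors)
  then show ?thesis
    by (simp add: fop_def sum_distrib_left algebra_simps)
qed

definition probe12 :: "nat set \<Rightarrow> 8" where
  "probe12 B = 1 + (if 1 \<in> B then 1 else 0) + (if 2 \<in> B then 2 else 0)"

definition probe34 :: "nat set \<Rightarrow> 8" where
  "probe34 B = 1 + (if 3 \<in> B then 1 else 0) + (if 4 \<in> B then 2 else 0)"

lemma probes_in_Zrel:
  "(\<lambda>B. if B \<in> P4 then probe12 B else 0) \<in> Zrel"
  "(\<lambda>B. if B \<in> P4 then probe34 B else 0) \<in> Zrel"
  "(\<lambda>B. if B \<in> P4 then 1 else 0) \<in> Zrel"
  by (intro restrict_P4_in_Zrel;
      simp add: Z_coeffs_def P4_eq mobius_insert probe12_def probe34_def)+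

definition probe_coeff :: "nat \<Rightarrow> nat \<Rightarrow> nat set \<Rightarrow> 8" where
  "probe_coeff p q = mobius (\<lambda>B. probe12 B ^ Suc p * probe34 B ^ Suc q)"

(* The functions 1, [x \<noteq> 1], [x = 2] on {0,1,2}: up to a power of 2, and modulo the next
   one, these are the Moebius coefficients of x \<mapsto> probe12^(x+1) at {1}, {2} and {1,2}. *)
definition basis3 :: "nat \<Rightarrow> nat \<Rightarrow> 8" where
  "basis3 r x = (if r = 0 then 1 else if r = 1 then of_bool (x \<noteq> 1) else of_bool (x = 2))"

lemma probe_coeff_table:
  assumes "x \<le> 2" "y \<le> 2"
  shows "2 dvd probe_coeff x y {1,3} - basis3 0 x * basis3 0 y"
    "4 dvd probe_coeff x y {1,4} - 2 * (basis3 0 x * basis3 1 y)"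
    "4 dvd probe_coeff x y {2,3} - 2 * (basis3 1 x * basis3 0 y)"
    "4 dvd probe_coeff x y {1,2,3} - 2 * (basis3 2 x * basis3 0 y)"
    "4 dvd probe_coeff x y {1,3,4} - 2 * (basis3 0 x * basis3 2 y)"
    "probe_coeff x y {2,4} = 4 * (basis3 1 x * basis3 1 y)"
    "probe_coeff x y {1,2,4} = 4 * (basis3 2 x * basis3 1 y)"
    "probe_coeff x y {2,3,4} = 4 * (basis3 1 x * basis3 2 y)"
    "probe_coeff x y {1,2,3,4} = 4 * (basis3 2 x * basis3 2 y)"
  using assms
  by (auto simp: probe_coeff_def mobius_insert probe12_def probe34_def basis3_def
      even_Z8_iff four_dvd_Z8_iff le_Suc_eq numeral_2_eq_2)

lemma preserves_imp_Z_coeffs_probe: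
  assumes pres: "preserves n (fop n b)" and ij: "i \<in> {1..n}" "j \<in> {1..n}" "i \<noteq> j"
  shows "Z_coeffs (\<lambda>A. \<Sum>\<alpha>\<in>I_set n. b \<alpha> * probe_coeff (\<alpha> i) (\<alpha> j) A)"
proof -
  define u where "u k B = (if B \<in> P4 then if k = i then probe12 B else if k = j then probe34 B else 1
    else 0)" for k B
  define F where "F B = (if B \<in> P4 then fop n b (\<lambda>k. u k B) else 0)" for B
  have "u k \<in> Zrel" for k
    using probes_in_Zrel by (cases "k = i"; cases "k = j") (simp_all add: u_def[abs_def] cong: if_cong)
  then have "F \<in> Zrel"
    using pres[unfolded preserves_def, rule_format, of u] by (simp add: F_def[abs_def])
  then have "Z_coeffs (mobius F)"
    by (simp add: Zrel_iff_mobius)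
  moreover have "mobius F A = (\<Sum>\<alpha>\<in>I_set n. b \<alpha> * probe_coeff (\<alpha> i) (\<alpha> j) A)"
    if "A \<in> P4" for A
  proof -
    have "mobius F A
        = mobius (\<lambda>B. \<Sum>\<alpha>\<in>I_set n. b \<alpha> * (probe12 B ^ Suc (\<alpha> i) * probe34 B ^ Suc (\<alpha> j))) A"
    proof (rule mobius_cong)
      fix T
      assume "T \<subseteq> A"
      then have "T \<in> P4"
        using that by (rule P4_subset[rotated])
      then have "F T = fop n b (\<lambda>k. u k T)"
        by (simp add: F_def)
      also have "\<dots> = (\<Sum>\<alpha>\<in>I_set n. b \<alpha> * (u i T ^ Suc (\<alpha> i) * u j T ^ Suc (\<alpha> j)))"
        using ij \<open>T \<in> P4\<close> by (intro fop_two_inputs) (auto simp: u_def)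
      finally show "F T = (\<Sum>\<alpha>\<in>I_set n. b \<alpha> * (probe12 T ^ Suc (\<alpha> i) * probe34 T ^ Suc (\<alpha> j)))"
        using ij \<open>T \<in> P4\<close> by (simp add: u_def)
    qed
    then show ?thesis
      by (simp add: mobius_sum probe_coeff_def)
  qed
  ultimately show ?thesis
    using Z_coeffs_cong[of "mobius F"] by simp
qed

lemma Z_coeffs_mixed_sets:
  assumes "Z_coeffs a"
  shows "2 dvd a {1,3}" "4 dvd a {1,4}" "4 dvd a {2,3}" "4 dvd a {1,2,3}" "4 dvd a {1,3,4}"
    "a {2,4} = 0" "a {1,2,4} = 0" "a {2,3,4} = 0" "a {1,2,3,4} = 0"
  using assms by (simp_all add: Z_coeffs_def P4_eq)

(* A modulus d = 0 stands for divisibility by 8, which is 0 in Z_8. *)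
lemma probe_coeff_detects_basis3:
  assumes "Z_coeffs a" "r \<le> 2" "s \<le> 2"
  obtains d A c where "d dvd a A"
    "\<And>x y. x \<le> 2 \<Longrightarrow> y \<le> 2 \<Longrightarrow> d dvd probe_coeff x y A - c * (basis3 r x * basis3 s y)"
    "\<And>z. d dvd c * z \<Longrightarrow> 2 dvd z"
proof -
  note Z = Z_coeffs_mixed_sets[OF assms(1)]
  note T = probe_coeff_table
  note mod4 = Z8_even_if_four_dvd_double and mod8 = Z8_even_if_four_times_eq_0
  have "r = 0 \<or> r = 1 \<or> r = 2" "s = 0 \<or> s = 1 \<or> s = 2"
    using assms(2,3) by auto
  then show thesis
  proof (elim disjE)
    assume rs: "r = 0" "s = 0"
    show thesis
      by (rule that[of 2 "{1,3}" 1]) (use rs Z T in simp_all)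
  next
    assume rs: "r = 0" "s = 1"
    show thesis
      by (rule that[of 4 "{1,4}" 2]) (use rs Z T mod4 in simp_all)
  next
    assume rs: "r = 0" "s = 2"
    show thesis
      by (rule that[of 4 "{1,3,4}" 2]) (use rs Z T mod4 in simp_all)
  next
    assume rs: "r = 1" "s = 0"
    show thesis
      by (rule that[of 4 "{2,3}" 2]) (use rs Z T mod4 in simp_all)
  next
    assume rs: "r = 1" "s = 1"
    show thesis
      by (rule that[of 0 "{2,4}" 4]) (use rs Z T mod8 in simp_all)
  next
    assume rs: "r = 1" "s = 2"
    show thesis
      by (rule that[of 0 "{2,3,4}" 4]) (use rs Z T mod8 in simp_all)
  next
    assume rs: "r = 2" "s = 0"
    show thesis
      by (rule that[of 4 "{1,2,3}" 2]) (use rs Z T mod4 in simp_all)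
  next
    assume rs: "r = 2" "s = 1"
    show thesis
      by (rule that[of 0 "{1,2,4}" 4]) (use rs Z T mod8 in simp_all)
  next
    assume rs: "r = 2" "s = 2"
    show thesis
      by (rule that[of 0 "{1,2,3,4}" 4]) (use rs Z T mod8 in simp_all)
  qed
qed

lemma preserves_imp_basis_sums_even:
  assumes "preserves n (fop n b)" "i \<in> {1..n}" "j \<in> {1..n}" "i \<noteq> j" "r \<le> 2" "s \<le> 2"
  shows "2 dvd (\<Sum>\<alpha>\<in>I_set n. b \<alpha> * (basis3 r (\<alpha> i) * basis3 s (\<alpha> j)))"
proof (rule probe_coeff_detects_basis3[OF preserves_imp_Z_coeffs_probe[OF assms(1-4)] assms(5,6)])
  fix d A c
  assume coeff: "d dvd (\<Sum>\<alpha>\<in>I_set n. b \<alpha> * probe_coeff (\<alpha> i) (\<alpha> j) A)"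
    and table: "\<And>x y. x \<le> 2 \<Longrightarrow> y \<le> 2 \<Longrightarrow> d dvd probe_coeff x y A - c * (basis3 r x * basis3 s y)"
    and cancel: "\<And>z. d dvd c * z \<Longrightarrow> 2 dvd z"
  have "\<forall>\<alpha>\<in>I_set n. \<alpha> i \<le> 2 \<and> \<alpha> j \<le> 2"
    by (simp add: I_set_def)
  then have "d dvd c * (\<Sum>\<alpha>\<in>I_set n. b \<alpha> * (basis3 r (\<alpha> i) * basis3 s (\<alpha> j)))"
    using table by (intro dvd_weighted_sum_congruent[OF coeff]) auto
  then show ?thesis
    by (rule cancel)
qed

definition basis3_coeff :: "(nat \<Rightarrow> 8) \<Rightarrow> nat \<Rightarrow> 8" where
  "basis3_coeff \<phi> r = (if r = 0 then \<phi> 1 else if r = 1 then \<phi> 0 - \<phi> 1 else \<phi> 2 - \<phi> 0)"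

lemma basis3_expansion: "x \<le> 2 \<Longrightarrow> \<phi> x = (\<Sum>r\<le>2. basis3_coeff \<phi> r * basis3 r x)"
  by (auto simp: basis3_coeff_def basis3_def numeral_2_eq_2 le_Suc_eq)

lemma even_bilinear_sums:
  fixes b :: "'i \<Rightarrow> 8" and f g :: "'i \<Rightarrow> nat"
  assumes range: "\<forall>\<alpha>\<in>I. f \<alpha> \<le> 2 \<and> g \<alpha> \<le> 2"
    and basis: "\<And>r s. r \<le> 2 \<Longrightarrow> s \<le> 2
      \<Longrightarrow> 2 dvd (\<Sum>\<alpha>\<in>I. b \<alpha> * (basis3 r (f \<alpha>) * basis3 s (g \<alpha>)))"
  shows "2 dvd (\<Sum>\<alpha>\<in>I. b \<alpha> * (\<phi> (f \<alpha>) * \<psi> (g \<alpha>)))"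
proof -
  let ?S = "\<lambda>r s. \<Sum>\<alpha>\<in>I. b \<alpha> * (basis3 r (f \<alpha>) * basis3 s (g \<alpha>))"
  have "(\<Sum>\<alpha>\<in>I. b \<alpha> * (\<phi> (f \<alpha>) * \<psi> (g \<alpha>)))
      = (\<Sum>\<alpha>\<in>I. b \<alpha> * ((\<Sum>r\<le>2. basis3_coeff \<phi> r * basis3 r (f \<alpha>))
          * (\<Sum>s\<le>2. basis3_coeff \<psi> s * basis3 s (g \<alpha>))))"
    using range by (intro sum.cong refl) (simp flip: basis3_expansion)
  also have "\<dots> = (\<Sum>s\<le>2. \<Sum>r\<le>2. basis3_coeff \<phi> r * basis3_coeff \<psi> s * ?S r s)"
    by (simp add: sum_product sum_distrib_left mult_ac sum.swap[where A = I])
  also have "2 dvd \<dots>"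
    using basis by (intro dvd_sum) (auto intro: dvd_mult)
  finally show ?thesis .
qed

lemma preserves_imp_pair_sums_even:
  assumes "preserves n (fop n b)" "i \<in> {1..n}" "j \<in> {1..n}" "i \<noteq> j"
  shows "2 dvd sum b {\<beta> \<in> I_set n. \<beta> i = p \<and> \<beta> j = q}"
proof -
  have "2 dvd (\<Sum>\<beta>\<in>I_set n. b \<beta> * (of_bool (\<beta> i = p) * of_bool (\<beta> j = q)))"
  proof (rule even_bilinear_sums[where f = "\<lambda>\<beta>. \<beta> i" and g = "\<lambda>\<beta>. \<beta> j"
        and \<phi> = "\<lambda>x. of_bool (x = p)" and \<psi> = "\<lambda>x. of_bool (x = q)"])
    show "\<forall>\<beta>\<in>I_set n. \<beta> i \<le> 2 \<and> \<beta> j \<le> 2"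
      by (simp add: I_set_def)
  qed (rule preserves_imp_basis_sums_even[OF assms])
  also have "(\<Sum>\<beta>\<in>I_set n. b \<beta> * (of_bool (\<beta> i = p) * of_bool (\<beta> j = q)))
      = sum b {\<beta> \<in> I_set n. \<beta> i = p \<and> \<beta> j = q}"
    unfolding sum.inter_filter[OF finite_I_set] by (intro sum.cong) auto
  finally show ?thesis .
qed

lemma I_set_zero: "\<alpha> \<in> I_set n \<Longrightarrow> k \<notin> {1..n} \<Longrightarrow> \<alpha> k = 0"
  by (simp add: I_set_def)

definition supp :: "nat \<Rightarrow> (nat \<Rightarrow> nat) \<Rightarrow> nat set" where
  "supp n \<alpha> = {k \<in> {1..n}. \<alpha> k \<noteq> 0}"

lemma pair_covering_supp:
  assumes "\<alpha> \<in> I_set n" "2 \<le> n"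
  obtains i j where "i \<in> {1..n}" "j \<in> {1..n}" "i \<noteq> j" "supp n \<alpha> \<subseteq> {i, j}"
proof -
  have "card (supp n \<alpha>) \<le> 2" "supp n \<alpha> \<subseteq> {1..n}"
    using assms(1) by (auto simp: I_set_def supp_def)
  then obtain T where "supp n \<alpha> \<subseteq> T" "T \<subseteq> {1..n}" "card T = 2"
    using exists_subset_between[of "supp n \<alpha>" 2 "{1..n}"] assms(2) by auto
  then show thesis
    using that by (auto simp: card_2_iff)
qed

(* Every beta \<noteq> alpha in the pair sum for alpha has strictly larger support. *)
lemma even_coeffs_from_pair_sums:
  fixes b :: "(nat \<Rightarrow> nat) \<Rightarrow> 8"
  assumes n: "2 \<le> n"
    and pairs: "\<And>i j p q. i \<in> {1..n} \<Longrightarrow> j \<in> {1..n} \<Longrightarrow> i \<noteq> j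
      \<Longrightarrow> 2 dvd sum b {\<beta> \<in> I_set n. \<beta> i = p \<and> \<beta> j = q}"
  shows "\<alpha> \<in> I_set n \<Longrightarrow> 2 dvd b \<alpha>"
proof (induction "2 - card (supp n \<alpha>)" arbitrary: \<alpha> rule: less_induct)
  case less
  obtain i j where ij: "i \<in> {1..n}" "j \<in> {1..n}" "i \<noteq> j" and cover: "supp n \<alpha> \<subseteq> {i, j}"
    using pair_covering_supp[OF less.prems n] .
  define S where "S = {\<beta> \<in> I_set n. \<beta> i = \<alpha> i \<and> \<beta> j = \<alpha> j}"
  have "2 dvd b \<beta>" if "\<beta> \<in> S - {\<alpha>}" for \<beta>
  proof (rule less.hyps)
    have \<beta>: "\<beta> \<in> I_set n" "\<beta> i = \<alpha> i" "\<beta> j = \<alpha> j" "\<beta> \<noteq> \<alpha>"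
      using that by (auto simp: S_def)
    obtain k where k: "\<beta> k \<noteq> \<alpha> k"
      using \<beta>(4) by (auto simp: fun_eq_iff)
    have "k \<in> {1..n}"
      using k I_set_zero[OF \<beta>(1)] I_set_zero[OF less.prems] by (rule_tac ccontr) auto
    moreover have "k \<notin> {i, j}"
      using k \<beta>(2,3) by auto
    ultimately have "k \<in> supp n \<beta> - supp n \<alpha>"
      using k cover by (auto simp: supp_def)
    moreover have "supp n \<alpha> \<subseteq> supp n \<beta>"
      using cover \<beta>(2,3) by (auto simp: supp_def)
    moreover have "finite (supp n \<beta>)"
      by (simp add: supp_def)
    ultimately have "card (supp n \<alpha>) < card (supp n \<beta>)"
      by (intro psubset_card_mono) blast+
    moreover have "card (supp n \<beta>) \<le> 2"
      using \<beta>(1) by (simp add: I_set_def supp_def)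
    ultimately show "2 - card (supp n \<beta>) < 2 - card (supp n \<alpha>)"
      by simp
    show "\<beta> \<in> I_set n"
      using \<beta>(1) .
  qed
  then have "2 dvd sum b (S - {\<alpha>})"
    by (rule dvd_sum)
  moreover have "2 dvd sum b S"
    unfolding S_def using ij by (rule pairs)
  moreover have "sum b S = b \<alpha> + sum b (S - {\<alpha>})"
    using less.prems finite_I_set by (intro sum.remove) (auto simp: S_def finite_subset)
  ultimately show ?case
    by (simp add: dvd_add_left_iff)
qed

theorem theorem3p1:
  fixes n :: nat and b :: "(nat \<Rightarrow> nat) \<Rightarrow> 8"
  assumes "n \<ge> 2"
  shows "preserves n (fop n b) \<longleftrightarrow> (\<forall>\<alpha>\<in>I_set n. (2::8) dvd b \<alpha>)"
proof
  assume pres: "preserves n (fop n b)"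
  show "\<forall>\<alpha>\<in>I_set n. 2 dvd b \<alpha>"
    using even_coeffs_from_pair_sums[OF assms preserves_imp_pair_sums_even[OF pres]] by blast
next
  assume "\<forall>\<alpha>\<in>I_set n. 2 dvd b \<alpha>"
  then show "preserves n (fop n b)"
    by (rule preserves_if_coeffs_even)
qed

end
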